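(* Let $\Gamma,T,\ast$ and $W$ be as in the context, and let $c$ be a cell of $\mathcal{UD}^n\Gamma$. Then: (1) $c$ is critical if and only if $c$ contains no order-respecting edge and all vertices of $c$ are blocked; (2) $c$ is redundant if and only if either (a) $c$ contains no order-respecting edge and at least one vertex of $c$ is unblocked, or (b) $c$ contains an order-respecting edge, and, with $e$ the minimal order-respecting edge of $c$, there is an unblocked vertex $v\in c$ with $v<\iota(e)$; (3) $c$ is collapsible if and only if $c$ contains an order-respecting edge and, with $e$ the minimal order-respecting edge of $c$, every vertex $v\in c$ with $v<\iota(e)$ is blocked.
   Context: $\Gamma$ is a finite connected graph and $n\ge1$; $d(v)$ is the degree of $v$, and $v$ is essential if $d(v)\ge3$. $\mathcal{UD}^n\Gamma$ is the cell complex whose cells are unordered $n$-element sets $c=\{c_1,\dots,c_n\}$ where each $c_i$ is a vertex or an edge of $\Gamma$ and the closed sets $c_i$ are pairwise disjoint (it is the quotient by the coordinate-permuting $S_n$-action of the subcomplex of $\Gamma^n$ formed by the product cells whose closures avoid the diagonal); the dimension of $c$ is the number of edges in it, and faces are obtained by replacing edges by endpoints. Fix a maximal tree $T$ of $\Gamma$ (edges not in $T$ are deleted edges) and a vertex $\ast$ of degree $1$ in $T$. For vertices $v_1,v_2$, $v_1\wedge v_2$ is the endpoint other than $\ast$ of $[\ast,v_1]\cap[\ast,v_2]$ (geodesics in $T$), or $\ast$ if this is $\{\ast\}$. Directions (edges) at each vertex $v$ are labelled $0,\dots,d(v)-1$, label $0$ for the edge of $T$ towards $\ast$ (the direction from $\ast$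 in $T$ gets label $1$); $g(v_1,v_2)$ is the label of the direction from $v_1$ on the $T$-geodesic to $v_2$, and $g(v,v)=0$. Order: $v_1\le v_2$ iff, with $v_3=v_1\wedge v_2$, $v_3=v_1$ or ($v_3\ne v_1$ and $g(v_3,v_1)<g(v_3,v_2)$); this is a linear order. For an edge $e$, $\iota(e)\ge\tau(e)$ are its endpoints; for $v\ne\ast$, $e(v)$ is the edge of $T$ at $v$ in direction $0$. Blocking and $W$: a vertex $v\neq\ast$ of a cell $c$ is unblocked in $c$ if $e(v)$ is disjoint from every element of $c$ other than $v$; then the elementary reduction of $c$ from $v$ is the cell obtained by replacing $v$ by $e(v)$. Otherwise (and always for $v=\ast$) $v$ is blocked. The principal reduction of $c$ is the elementary reduction from the smallest unblocked vertex of $c$ (if there is one). Define $W$: for a $0$-cell $c$, $W_0(c)$ is its principal reduction if it exists; for $i>0$ and an $i$-cell $c$, $W_i(c)$ is its principal reduction if this exists and $c\notin\mathrm{im}W_{i-1}$; otherwise undefined. A cell is redundant if it is in the domain of $W$, collapsible if it is in the image of $W$, and critical otherwise. An edge $e$ of a cell $c$ is order-respecting in $c$ if $e\subseteq T$ and for every vertex $v\in c$ with $v\neq\ast$, $e(v)\cap e=\{\tau(e)\}$ implies $v>\iota(e)$. If $c$ has order-respecting edges, the minimal one is the one with smallest $\iota(e)$. *)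

theory Defs
  imports Main
begin

text \<open>A finite (multi)graph Gamma with vertex set Vs, edge set Es and endpoint map ends
  (loops: one endpoint; ordinary edges: two), a maximal tree Tr, a base vertex base (the
  vertex called star) and a labelling lab v e of the directions at v given by the edges e of Tr
  (the labels of non-tree directions never enter the definitions below).\<close>

record ('v,'e) gsetup =
  Vs   :: "'v set"
  Es   :: "'e set"
  ends :: "'e \<Rightarrow> 'v set"
  Tr   :: "'e set"
  base :: 'v
  lab  :: "'v \<Rightarrow> 'e \<Rightarrow> nat"

definition adjrel :: "('v,'e) gsetup \<Rightarrow> 'e set \<Rightarrow> ('v \<times> 'v) set" where
  "adjrel G F = {(u,w). \<exists>e\<in>F. ends G e = {u,w}}"

definition deg :: "('v,'e) gsetup \<Rightarrow> 'v \<Rightarrow> nat" where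
  "deg G v = card {e\<in>Es G. v \<in> ends G e} + card {e\<in>Es G. ends G e = {v}}"

definition geo :: "('v,'e) gsetup \<Rightarrow> 'v \<Rightarrow> 'v \<Rightarrow> 'v list" where
  "geo G a b = (THE p. p \<noteq> [] \<and> hd p = a \<and> last p = b \<and> distinct p \<and>
      (\<forall>i. Suc i < length p \<longrightarrow> (p!i, p!Suc i) \<in> adjrel G (Tr G)))"

definition tedge :: "('v,'e) gsetup \<Rightarrow> 'v \<Rightarrow> 'v \<Rightarrow> 'e" where
  "tedge G u w = (THE e. e \<in> Tr G \<and> ends G e = {u,w})"

definition eT :: "('v,'e) gsetup \<Rightarrow> 'v \<Rightarrow> 'e" where
  "eT G v = tedge G v (geo G v (base G) ! 1)"

definition gdir :: "('v,'e) gsetup \<Rightarrow> 'v \<Rightarrow> 'v \<Rightarrow> nat" where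
  "gdir G a b = (if a = b then 0 else lab G a (tedge G a (geo G a b ! 1)))"

definition meet :: "('v,'e) gsetup \<Rightarrow> 'v \<Rightarrow> 'v \<Rightarrow> 'v" where
  "meet G a b = (THE x. x \<in> Vs G \<and>
      set (geo G (base G) x) = set (geo G (base G) a) \<inter> set (geo G (base G) b))"

definition vle :: "('v,'e) gsetup \<Rightarrow> 'v \<Rightarrow> 'v \<Rightarrow> bool" where
  "vle G a b \<longleftrightarrow> (let c = meet G a b in c = a \<or> (c \<noteq> a \<and> gdir G c a < gdir G c b))"

definition vlt :: "('v,'e) gsetup \<Rightarrow> 'v \<Rightarrow> 'v \<Rightarrow> bool" where
  "vlt G a b \<longleftrightarrow> vle G a b \<and> a \<noteq> b"

definition iota :: "('v,'e) gsetup \<Rightarrow> 'e \<Rightarrow> 'v" where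
  "iota G e = (THE x. x \<in> ends G e \<and> (\<forall>y\<in>ends G e. vle G y x))"

definition tau :: "('v,'e) gsetup \<Rightarrow> 'e \<Rightarrow> 'v" where
  "tau G e = (THE x. x \<in> ends G e \<and> (\<forall>y\<in>ends G e. vle G x y))"

definition UD_setup :: "('v,'e) gsetup \<Rightarrow> bool" where
  "UD_setup G \<longleftrightarrow>
     finite (Vs G) \<and> finite (Es G) \<and>
     (\<forall>e\<in>Es G. ends G e \<subseteq> Vs G \<and> ends G e \<noteq> {} \<and> card (ends G e) \<le> 2) \<and>
     (\<forall>a\<in>Vs G. \<forall>b\<in>Vs G. (a,b) \<in> (adjrel G (Es G))\<^sup>*) \<and>
     Tr G \<subseteq> Es G \<and>
     (\<forall>a\<in>Vs G. \<forall>b\<in>Vs G. (a,b) \<in> (adjrel G (Tr G))\<^sup>*) \<and>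
     (\<forall>e\<in>Tr G. \<exists>a b. ends G e = {a,b} \<and> (a,b) \<notin> (adjrel G (Tr G - {e}))\<^sup>*) \<and>
     base G \<in> Vs G \<and> card {e\<in>Tr G. base G \<in> ends G e} = 1 \<and>
     (\<forall>v\<in>Vs G. inj_on (lab G v) {e\<in>Tr G. v \<in> ends G e}) \<and>
     (\<forall>v\<in>Vs G. v \<noteq> base G \<longrightarrow> lab G v (eT G v) = 0 \<and>
          (\<forall>e\<in>Tr G. v \<in> ends G e \<longrightarrow> lab G v e < deg G v)) \<and>
     (\<forall>e\<in>Tr G. base G \<in> ends G e \<longrightarrow> lab G (base G) e = 1)"

text \<open>Elements of cells: Inl v (vertex) or Inr e (edge); clo gives the closed set.\<close>
definition clo :: "('v,'e) gsetup \<Rightarrow> 'v + 'e \<Rightarrow> ('v + 'e) set" where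
  "clo G x = (case x of Inl v \<Rightarrow> {Inl v} | Inr e \<Rightarrow> insert (Inr e) (Inl ` ends G e))"

definition is_cell :: "('v,'e) gsetup \<Rightarrow> nat \<Rightarrow> ('v + 'e) set \<Rightarrow> bool" where
  "is_cell G n c \<longleftrightarrow> finite c \<and> card c = n \<and> c \<subseteq> Inl ` Vs G \<union> Inr ` Es G \<and>
     (\<forall>x\<in>c. \<forall>y\<in>c. x \<noteq> y \<longrightarrow> clo G x \<inter> clo G y = {})"

definition cdim :: "('v + 'e) set \<Rightarrow> nat" where
  "cdim c = card {e. Inr e \<in> c}"

definition unblocked :: "('v,'e) gsetup \<Rightarrow> ('v + 'e) set \<Rightarrow> 'v \<Rightarrow> bool" where
  "unblocked G c v \<longleftrightarrow> Inl v \<in> c \<and> v \<noteq> base G \<and>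
     (\<forall>x\<in>c. x \<noteq> Inl v \<longrightarrow> clo G (Inr (eT G v)) \<inter> clo G x = {})"

definition blocked :: "('v,'e) gsetup \<Rightarrow> ('v + 'e) set \<Rightarrow> 'v \<Rightarrow> bool" where
  "blocked G c v \<longleftrightarrow> Inl v \<in> c \<and> \<not> unblocked G c v"

definition elred :: "('v,'e) gsetup \<Rightarrow> ('v + 'e) set \<Rightarrow> 'v \<Rightarrow> ('v + 'e) set" where
  "elred G c v = insert (Inr (eT G v)) (c - {Inl v})"

definition principal :: "('v,'e) gsetup \<Rightarrow> ('v + 'e) set \<Rightarrow> ('v + 'e) set option" where
  "principal G c = (if \<exists>v. unblocked G c v
     then Some (elred G c (THE v. unblocked G c v \<and> (\<forall>w. unblocked G c w \<longrightarrow> vle G v w)))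
     else None)"

text \<open>Wdom G n i = domain of W_i on the cells of UD^n Gamma; W_i(c) = the (principal G c).\<close>
primrec Wdom :: "('v,'e) gsetup \<Rightarrow> nat \<Rightarrow> nat \<Rightarrow> ('v + 'e) set set" where
  "Wdom G n 0 = {c. is_cell G n c \<and> cdim c = 0 \<and> principal G c \<noteq> None}"
| "Wdom G n (Suc i) = {c. is_cell G n c \<and> cdim c = Suc i \<and> principal G c \<noteq> None \<and>
      c \<notin> (\<lambda>d. the (principal G d)) ` Wdom G n i}"

definition redundant :: "('v,'e) gsetup \<Rightarrow> nat \<Rightarrow> ('v + 'e) set \<Rightarrow> bool" where
  "redundant G n c \<longleftrightarrow> (\<exists>i. c \<in> Wdom G n i)"

definition collapsible :: "('v,'e) gsetup \<Rightarrow> nat \<Rightarrow> ('v + 'e) set \<Rightarrow> bool" where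
  "collapsible G n c \<longleftrightarrow> (\<exists>i. c \<in> (\<lambda>d. the (principal G d)) ` Wdom G n i)"

definition critical :: "('v,'e) gsetup \<Rightarrow> nat \<Rightarrow> ('v + 'e) set \<Rightarrow> bool" where
  "critical G n c \<longleftrightarrow> is_cell G n c \<and> \<not> redundant G n c \<and> \<not> collapsible G n c"

definition order_resp :: "('v,'e) gsetup \<Rightarrow> ('v + 'e) set \<Rightarrow> 'e \<Rightarrow> bool" where
  "order_resp G c e \<longleftrightarrow> Inr e \<in> c \<and> e \<in> Tr G \<and>
     (\<forall>v. Inl v \<in> c \<and> v \<noteq> base G \<and>
        clo G (Inr (eT G v)) \<inter> clo G (Inr e) = {Inl (tau G e)} \<longrightarrow> vlt G (iota G e) v)"

definition min_order_resp :: "('v,'e) gsetup \<Rightarrow> ('v + 'e) set \<Rightarrow> 'e" where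
  "min_order_resp G c = (THE e. order_resp G c e \<and>
      (\<forall>e'. order_resp G c e' \<longrightarrow> vle G (iota G e) (iota G e')))"

end

theory Submission
  imports Defs "HOL-Library.Sublist" "HOL-Library.List_Lexorder"
begin

text \<open>The order on vertices is the lexicographic order of the sequences of direction labels
  read along the tree geodesics from the base vertex; hence it is linear, and least unblocked
  vertices and minimal order-respecting edges exist.

  Reducing a cell d from its least unblocked vertex u creates the edge e(u), which is
  order-respecting in the reduced cell with iota(e(u)) = u, and every vertex below u stays
  blocked. Conversely, a cell c with an order-respecting edge whose vertices below the minimal
  one e are all blocked is the principal reduction of the cell obtained by replacing e by
  iota(e), and that cell is not of the same kind. By induction on the dimension, the domain of
  W consists of the cells with an unblocked vertex that are not of this kind and its image of
  the cells of this kind, which gives all three characterisations.\<close>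

lemma successively_rtrancl:
  "successively (\<lambda>u w. (u, w) \<in> S) p \<Longrightarrow> p \<noteq> [] \<Longrightarrow> (hd p, last p) \<in> S\<^sup>*"
  by (induction p rule: induct_list012) (auto intro: converse_rtrancl_into_rtrancl)

lemma distinct_hd_eq_last: "distinct q \<Longrightarrow> q \<noteq> [] \<Longrightarrow> hd q = last q \<Longrightarrow> q = [hd q]"
  by (cases q) (auto split: if_splits)

lemma le_append_list: "(xs :: 'a :: linorder list) \<le> xs @ ys"
  by (induction xs) auto

lemma not_append_Cons_le: "\<not> ((xs :: 'a :: linorder list) @ y # ys \<le> xs)"
  by (induction xs) auto

lemma append_Cons_le_append_Cons_iff:
  "((zs :: 'a :: linorder list) @ p # r \<le> zs @ q # s) \<longleftrightarrow> p < q \<or> p = q \<and> r \<le> s"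
  by (induction zs) auto

lemma longest_common_prefix_append_Cons:
  "x \<noteq> y \<Longrightarrow> longest_common_prefix (L @ x # xs) (L @ y # ys) = L"
  by (induction L) auto

section \<open>Paths in the maximal tree\<close>

lemma adjrel_sym: "(u, w) \<in> adjrel G F \<Longrightarrow> (w, u) \<in> adjrel G F"
  unfolding adjrel_def by (auto simp: insert_commute)

lemma sym_rtrancl_adjrel: "sym ((adjrel G F)\<^sup>*)"
  by (rule sym_rtrancl, rule symI, erule adjrel_sym)

lemma clo_Inl [simp]: "clo G (Inl v) = {Inl v}"
  by (simp add: clo_def)

lemma clo_Inr [simp]: "clo G (Inr e) = insert (Inr e) (Inl ` ends G e)"
  by (simp add: clo_def)

locale UD_graph =
  fixes G :: "('v,'e) gsetup"
  assumes UD: "UD_setup G"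
begin

abbreviation tadj :: "('v \<times> 'v) set" where
  "tadj \<equiv> adjrel G (Tr G)"

lemma Tr_subset_Es: "Tr G \<subseteq> Es G"
  using UD unfolding UD_setup_def by (elim conjE)

lemma ends_subset_Vs: "e \<in> Es G \<Longrightarrow> ends G e \<subseteq> Vs G"
  using UD unfolding UD_setup_def by (elim conjE) auto

lemma base_in_Vs: "base G \<in> Vs G"
  using UD unfolding UD_setup_def by (elim conjE)

lemma tree_connected: "a \<in> Vs G \<Longrightarrow> b \<in> Vs G \<Longrightarrow> (a, b) \<in> tadj\<^sup>*"
  using UD unfolding UD_setup_def by (elim conjE) auto

lemma lab_inj_on: "v \<in> Vs G \<Longrightarrow> inj_on (lab G v) {e \<in> Tr G. v \<in> ends G e}"
  using UD unfolding UD_setup_def by (elim conjE) auto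

lemma tree_edge_cut:
  "e \<in> Tr G \<Longrightarrow> \<exists>a b. ends G e = {a, b} \<and> (a, b) \<notin> (adjrel G (Tr G - {e}))\<^sup>*"
  using UD unfolding UD_setup_def by (elim conjE) (erule bspec)

lemma tree_edge_bridge:
  assumes "e \<in> Tr G" "ends G e = {a, b}"
  shows "(a, b) \<notin> (adjrel G (Tr G - {e}))\<^sup>*"
proof
  assume ab: "(a, b) \<in> (adjrel G (Tr G - {e}))\<^sup>*"
  then have ba: "(b, a) \<in> (adjrel G (Tr G - {e}))\<^sup>*"
    by (rule symD[OF sym_rtrancl_adjrel])
  obtain a' b' where e: "ends G e = {a', b'}" "(a', b') \<notin> (adjrel G (Tr G - {e}))\<^sup>*"
    using tree_edge_cut[OF assms(1)] by blast
  have "{a', b'} = {a, b}"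
    using e(1) assms(2) by simp
  then show False
    unfolding doubleton_eq_iff using ab ba e(2) by blast
qed

lemma tree_edge_eqI:
  assumes "e1 \<in> Tr G" "e2 \<in> Tr G" "ends G e1 = ends G e2"
  shows "e1 = e2"
proof (rule ccontr)
  assume "e1 \<noteq> e2"
  obtain a b where ab: "ends G e1 = {a, b}"
    using tree_edge_cut[OF assms(1)] by blast
  then have "(a, b) \<in> adjrel G (Tr G - {e1})"
    unfolding adjrel_def using assms \<open>e1 \<noteq> e2\<close> by auto
  with tree_edge_bridge[OF assms(1) ab] show False by blast
qed

lemma tadj_irrefl: "(a, a) \<notin> tadj"
proof
  assume "(a, a) \<in> tadj"
  then obtain e where "e \<in> Tr G" "ends G e = {a, a}"
    unfolding adjrel_def by blast
  with tree_edge_bridge[of e a a] show False by simp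
qed

lemma tadj_Vs: "(a, b) \<in> tadj \<Longrightarrow> a \<in> Vs G \<and> b \<in> Vs G"
  unfolding adjrel_def using Tr_subset_Es ends_subset_Vs by blast

lemma tedge_eq: "e \<in> Tr G \<Longrightarrow> ends G e = {u, w} \<Longrightarrow> tedge G u w = e"
  unfolding tedge_def using tree_edge_eqI by (intro the_equality) auto

lemma tedge_tadj: "(u, w) \<in> tadj \<Longrightarrow> tedge G u w \<in> Tr G \<and> ends G (tedge G u w) = {u, w}"
  unfolding adjrel_def using tedge_eq by blast

definition tree_path :: "'v list \<Rightarrow> bool" where
  "tree_path p \<longleftrightarrow> p \<noteq> [] \<and> distinct p \<and> successively (\<lambda>u w. (u, w) \<in> tadj) p"

lemma tree_path_rev: "tree_path p \<Longrightarrow> tree_path (rev p)"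
  unfolding tree_path_def by (auto elim!: successively_mono intro: adjrel_sym)

lemma tree_path_prefix: "tree_path (xs @ ys) \<Longrightarrow> xs \<noteq> [] \<Longrightarrow> tree_path xs"
  unfolding tree_path_def by (auto simp: successively_append_iff)

lemma tree_path_suffix: "tree_path (xs @ ys) \<Longrightarrow> ys \<noteq> [] \<Longrightarrow> tree_path ys"
  unfolding tree_path_def by (auto simp: successively_append_iff)

lemma tree_path_Vs: "tree_path p \<Longrightarrow> hd p \<in> Vs G \<Longrightarrow> set p \<subseteq> Vs G"
  by (induction p rule: induct_list012) (auto simp: tree_path_def dest: tadj_Vs)

lemma tree_path_avoiding_rtrancl:
  assumes p: "tree_path p" and e: "e \<in> Tr G" "a \<in> ends G e" and a: "a \<notin> set p"
  shows "(hd p, last p) \<in> (adjrel G (Tr G - {e}))\<^sup>*"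
proof -
  have "successively (\<lambda>u w. (u, w) \<in> tadj) p"
    using p by (simp add: tree_path_def)
  then have "successively (\<lambda>u w. (u, w) \<in> adjrel G (Tr G - {e})) p"
  proof (rule successively_mono)
    fix u w assume uw: "u \<in> set p" "w \<in> set p" "(u, w) \<in> tadj"
    then obtain e' where e': "e' \<in> Tr G" "ends G e' = {u, w}"
      unfolding adjrel_def by blast
    moreover have "e' \<noteq> e"
      using e' e a uw(1,2) by auto
    ultimately show "(u, w) \<in> adjrel G (Tr G - {e})"
      unfolding adjrel_def by blast
  qed
  then show ?thesis
    using p successively_rtrancl unfolding tree_path_def by blast
qed

lemma tree_paths_diverge:
  assumes xp: "tree_path (a # x # p)" and yq: "tree_path (a # y # q)" and "x \<noteq> y"
  shows "last (x # p) \<noteq> last (y # q)"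
proof
  assume last: "last (x # p) = last (y # q)"
  define e where "e = tedge G a x"
  have ax: "(a, x) \<in> tadj" "(a, y) \<in> tadj" "a \<noteq> x"
    using xp yq by (auto simp: tree_path_def)
  then have e: "e \<in> Tr G" "ends G e = {a, x}"
    using tedge_tadj e_def by auto
  let ?S = "adjrel G (Tr G - {e})"
  have a: "a \<in> ends G e" "a \<notin> set (x # p)" "a \<notin> set (y # q)"
    using e(2) xp yq by (auto simp: tree_path_def)
  have tp: "tree_path (x # p)" "tree_path (y # q)"
    using tree_path_suffix[of "[a]"] xp yq by auto
  have "(x, last (x # p)) \<in> ?S\<^sup>*"
    using tree_path_avoiding_rtrancl[OF tp(1) e(1) a(1,2)] by simp
  moreover have "(y, last (y # q)) \<in> ?S\<^sup>*"
    using tree_path_avoiding_rtrancl[OF tp(2) e(1) a(1,3)] by simp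
  moreover have "(a, y) \<in> ?S"
  proof -
    have "tedge G a y \<noteq> e"
      using tedge_tadj[OF ax(2)] e ax(3) \<open>x \<noteq> y\<close> by (auto simp: doubleton_eq_iff)
    then show ?thesis
      using tedge_tadj[OF ax(2)] unfolding adjrel_def by blast
  qed
  ultimately have "(a, x) \<in> ?S\<^sup>*"
    using last symD[OF sym_rtrancl_adjrel] by (metis converse_rtrancl_into_rtrancl rtrancl_trans)
  with tree_edge_bridge[OF e] show False
    by blast
qed

lemma tree_path_unique:
  "tree_path p \<Longrightarrow> tree_path q \<Longrightarrow> hd p = hd q \<Longrightarrow> last p = last q \<Longrightarrow> p = q"
proof (induction p arbitrary: q rule: induct_list012)
  case 1
  then show ?case by (simp add: tree_path_def)
next
  case (2 a)
  then show ?case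
    using distinct_hd_eq_last[of q] by (simp add: tree_path_def)
next
  case (3 a x p)
  have "last (a # x # p) \<in> set (x # p)"
    by simp
  then have "last q \<noteq> a"
    using "3.prems"(1,4) by (auto simp: tree_path_def)
  then obtain y q' where q: "q = a # y # q'"
    using 3 by (cases q; cases "tl q") (auto simp: tree_path_def)
  then have "x = y"
    using tree_paths_diverge "3.prems" by fastforce
  moreover have tp: "tree_path (x # p)" "tree_path (y # q')"
    using tree_path_suffix[of "[a]"] "3.prems"(1,2) q by auto
  ultimately have "x # p = y # q'"
    by (intro "3.IH"(2)[OF tp]) (use "3.prems"(4) q in simp_all)
  then show ?case
    using q by simp
qed

lemma tree_path_exists:
  assumes "a \<in> Vs G" "b \<in> Vs G"
  shows "\<exists>p. tree_path p \<and> hd p = a \<and> last p = b"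
proof -
  have "(a, b) \<in> tadj\<^sup>*"
    using tree_connected assms by blast
  then show ?thesis
  proof (induction rule: rtrancl_induct)
    case base
    show ?case by (intro exI[of _ "[a]"]) (simp add: tree_path_def)
  next
    case (step y z)
    then obtain p where p: "tree_path p" "hd p = a" "last p = y" by blast
    show ?case
    proof (cases "z \<in> set p")
      case True
      then obtain xs ys where xs: "p = xs @ z # ys" by (meson split_list)
      then have "tree_path (xs @ [z])"
        using tree_path_prefix[of "xs @ [z]" ys] p by simp
      moreover have "hd (xs @ [z]) = a"
        using p xs by (cases xs) auto
      ultimately show ?thesis by auto
    next
      case False
      then have "tree_path (p @ [z]) \<and> hd (p @ [z]) = a"
        using p step(2) by (auto simp: tree_path_def successively_append_iff)
      then show ?thesis by auto
    qed
  qed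
qed

lemma geo_tree_path: "tree_path p \<Longrightarrow> geo G (hd p) (last p) = p"
  unfolding geo_def
  by (rule the_equality) (auto simp: tree_path_def successively_conv_nth intro: tree_path_unique)

lemma geo_eqI: "tree_path p \<Longrightarrow> hd p = a \<Longrightarrow> last p = b \<Longrightarrow> geo G a b = p"
  using geo_tree_path by blast

lemma tree_path_geo:
  "a \<in> Vs G \<Longrightarrow> b \<in> Vs G \<Longrightarrow>
     tree_path (geo G a b) \<and> hd (geo G a b) = a \<and> last (geo G a b) = b"
  using tree_path_exists geo_tree_path by metis

end

section \<open>The order on vertices\<close>

fun dir_labels :: "('v,'e) gsetup \<Rightarrow> 'v list \<Rightarrow> nat list" where
  "dir_labels G (x # y # zs) = lab G x (tedge G x y) # dir_labels G (y # zs)"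
| "dir_labels G _ = []"

lemma dir_labels_append:
  "xs \<noteq> [] \<Longrightarrow> dir_labels G (xs @ y # zs) =
     dir_labels G xs @ lab G (last xs) (tedge G (last xs) y) # dir_labels G (y # zs)"
  by (induction xs rule: induct_list012) auto

lemma dir_labels_prefix_le:
  assumes "prefix p q" "p \<noteq> []"
  shows "dir_labels G p \<le> dir_labels G q"
proof -
  obtain s where "q = p @ s"
    using assms(1) prefix_def by blast
  then show ?thesis
    using assms(2) by (cases s) (auto simp: dir_labels_append le_append_list)
qed

lemma meet_sym: "meet G a b = meet G b a"
  unfolding meet_def by (simp add: Int_commute)

context UD_graph
begin

abbreviation base_path :: "'v \<Rightarrow> 'v list" where
  "base_path v \<equiv> geo G (base G) v"

text \<open>For the base vertex the index is out of range and parent is unspecified.\<close>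

definition parent :: "'v \<Rightarrow> 'v" where
  "parent v = geo G v (base G) ! 1"

lemma tree_path_base_path:
  "v \<in> Vs G \<Longrightarrow> tree_path (base_path v) \<and> hd (base_path v) = base G \<and> last (base_path v) = v"
  using tree_path_geo base_in_Vs by blast

lemma mem_base_path: "v \<in> Vs G \<Longrightarrow> v \<in> set (base_path v)"
  using tree_path_base_path by (metis last_in_set tree_path_def)

lemma base_path_inj: "a \<in> Vs G \<Longrightarrow> b \<in> Vs G \<Longrightarrow> base_path a = base_path b \<Longrightarrow> a = b"
  using tree_path_base_path by metis

lemma geo_swap: "a \<in> Vs G \<Longrightarrow> b \<in> Vs G \<Longrightarrow> geo G b a = rev (geo G a b)"
  using tree_path_geo[of a b] tree_path_rev by (intro geo_eqI) (auto simp: hd_rev last_rev tree_path_def)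

lemma base_path_parent:
  assumes "v \<in> Vs G" "v \<noteq> base G"
  shows "base_path v = base_path (parent v) @ [v] \<and> parent v \<in> Vs G \<and> (v, parent v) \<in> tadj"
proof -
  let ?g = "geo G v (base G)"
  have g: "tree_path ?g" "hd ?g = v" "last ?g = base G"
    using tree_path_geo assms(1) base_in_Vs by blast+
  then obtain w t where wt: "?g = v # w # t"
    using assms(2) by (cases ?g; cases "tl ?g") (auto simp: tree_path_def)
  have vw: "(v, w) \<in> tadj" "w \<in> Vs G"
    using g(1) wt tadj_Vs by (auto simp: tree_path_def)
  have "geo G w (base G) = w # t"
    using tree_path_suffix[of "[v]" "w # t"] g wt by (intro geo_eqI) auto
  then have "base_path w = rev (w # t)"
    using geo_swap[OF base_in_Vs vw(2)] by simp
  moreover have "base_path v = rev (v # w # t)"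
    using geo_swap[OF base_in_Vs assms(1)] wt by simp
  ultimately show ?thesis
    using wt vw unfolding parent_def by simp
qed

lemma base_path_prefix:
  assumes "v \<in> Vs G" "z \<in> set (base_path v)"
  shows "prefix (base_path z) (base_path v) \<and> z \<in> Vs G"
proof -
  obtain xs ys where xs: "base_path v = xs @ z # ys"
    using assms(2) by (meson split_list)
  have "tree_path (xs @ [z])"
    using tree_path_prefix[of "xs @ [z]" ys] tree_path_base_path[OF assms(1)] xs by simp
  moreover have "hd (xs @ [z]) = base G"
    using tree_path_base_path[OF assms(1)] xs by (cases xs) auto
  ultimately have "base_path z = xs @ [z]"
    by (intro geo_eqI) auto
  moreover have "set (base_path v) \<subseteq> Vs G"
    using tree_path_Vs tree_path_base_path[OF assms(1)] base_in_Vs by metis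
  then have "z \<in> Vs G"
    using assms(2) by blast
  ultimately show ?thesis
    using xs by simp
qed

lemma parent_eqI:
  assumes "(a, b) \<in> tadj" "b \<notin> set (base_path a)"
  shows "b \<noteq> base G \<and> parent b = a"
proof -
  have V: "a \<in> Vs G" "b \<in> Vs G"
    using tadj_Vs assms(1) by auto
  have "tree_path (base_path a @ [b])"
    using tree_path_base_path[OF V(1)] assms by (auto simp: tree_path_def successively_append_iff)
  then have rb: "base_path b = base_path a @ [b]"
    using tree_path_base_path[OF V(1)] by (intro geo_eqI) (auto simp: tree_path_def)
  have "b \<noteq> base G"
    using assms(2) tree_path_base_path[OF V(1)] by (metis hd_in_set tree_path_def)
  then show ?thesis
    using base_path_parent[OF V(2)] rb base_path_inj[OF _ V(1)] by auto
qed

lemma tadj_parent: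
  assumes ab: "(a, b) \<in> tadj"
  shows "(b \<noteq> base G \<and> parent b = a) \<or> (a \<noteq> base G \<and> parent a = b)"
proof -
  have V: "a \<in> Vs G" "b \<in> Vs G"
    using tadj_Vs ab by auto
  consider "b \<notin> set (base_path a)" | "a \<notin> set (base_path b)"
    | "b \<in> set (base_path a)" "a \<in> set (base_path b)"
    by blast
  then show ?thesis
  proof cases
    case 1
    then show ?thesis
      using parent_eqI[OF ab] by blast
  next
    case 2
    then show ?thesis
      using parent_eqI[OF adjrel_sym[OF ab]] by blast
  next
    case 3
    then have "prefix (base_path a) (base_path b)" "prefix (base_path b) (base_path a)"
      using base_path_prefix V by blast+
    then have "a = b"
      using base_path_inj[OF V] prefix_order.antisym by blast
    then show ?thesis
      using ab tadj_irrefl by blast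
  qed
qed

lemma eT_parent:
  assumes "v \<in> Vs G" "v \<noteq> base G"
  shows "eT G v \<in> Tr G \<and> ends G (eT G v) = {v, parent v}"
  using tedge_tadj base_path_parent[OF assms] unfolding eT_def parent_def[symmetric] by blast

lemma tree_edge_eT:
  assumes "e \<in> Tr G"
  obtains v where "v \<in> Vs G" "v \<noteq> base G" "eT G v = e"
proof -
  obtain a b where ab: "ends G e = {a, b}"
    using tree_edge_cut[OF assms] by blast
  have tab: "(a, b) \<in> tadj"
    using assms ab unfolding adjrel_def by blast
  then have "\<exists>v\<in>{a, b}. v \<noteq> base G \<and> {v, parent v} = {a, b}"
    using tadj_parent[OF tab] by (auto simp: insert_commute)
  then obtain v where v: "v \<in> Vs G" "v \<noteq> base G" "{v, parent v} = {a, b}"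
    using tadj_Vs[OF tab] by blast
  then have "eT G v = e"
    using eT_parent[OF v(1,2)] ab by (intro tree_edge_eqI[OF _ assms]) auto
  then show thesis
    using that v by blast
qed

lemma meet_eqI:
  assumes "m \<in> Vs G" "set (base_path m) = set (base_path a) \<inter> set (base_path b)"
  shows "meet G a b = m"
  unfolding meet_def
proof (rule the_equality)
  fix x assume x: "x \<in> Vs G \<and> set (base_path x) = set (base_path a) \<inter> set (base_path b)"
  then have "x \<in> set (base_path m)" "m \<in> set (base_path x)"
    using mem_base_path assms by auto
  then have "base_path x = base_path m"
    using base_path_prefix x assms(1) prefix_order.antisym by blast
  then show "x = m"
    using base_path_inj x assms(1) by blast
qed (use assms in blast)

lemma meet_prefix: "a \<in> Vs G \<Longrightarrow> prefix (base_path a) (base_path b) \<Longrightarrow> meet G a b = a"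
  by (rule meet_eqI) (auto dest: set_mono_prefix)

lemma meet_parallel:
  assumes "a \<in> Vs G" "b \<in> Vs G" "base_path a = L @ x # ra" "base_path b = L @ y # rb" "x \<noteq> y"
  shows "L \<noteq> [] \<and> meet G a b = last L"
proof -
  have L: "L \<noteq> []"
    using tree_path_base_path assms by (metis append_Nil list.sel(1))
  then have "tree_path L" "hd L = base G"
    using tree_path_prefix[of L] tree_path_base_path[OF assms(1)] assms(3) by auto
  then have rL: "base_path (last L) = L" and "set L \<subseteq> Vs G"
    using geo_eqI tree_path_Vs base_in_Vs by metis+
  then have mV: "last L \<in> Vs G"
    using L by auto
  have "set (base_path a) \<inter> set (base_path b) \<subseteq> set L"
  proof
    fix z assume z: "z \<in> set (base_path a) \<inter> set (base_path b)"
    then have "prefix (base_path z) (base_path a)" "prefix (base_path z) (base_path b)" "z \<in> Vs G"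
      using base_path_prefix assms(1,2) by blast+
    then have "prefix (base_path z) L"
      using longest_common_prefix_max_prefix longest_common_prefix_append_Cons assms(3-5)
      by metis
    then show "z \<in> set L"
      using mem_base_path[OF \<open>z \<in> Vs G\<close>] set_mono_prefix by blast
  qed
  then have "set (base_path (last L)) = set (base_path a) \<inter> set (base_path b)"
    using rL assms(3,4) by auto
  then show ?thesis
    using meet_eqI[OF mV] L by blast
qed

lemma gdir_base_path_branch:
  assumes "a \<in> Vs G" "base_path a = L @ x # r" "L \<noteq> []"
  shows "last L \<noteq> a \<and> gdir G (last L) a = lab G (last L) (tedge G (last L) x) \<and> (last L, x) \<in> tadj"
proof -
  let ?m = "last L"
  have "base_path a = butlast L @ ?m # x # r"
    using assms(2,3) by (metis append.assoc append_Cons append_butlast_last_id append_Nil)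
  then have tp: "tree_path (?m # x # r)"
    using tree_path_suffix tree_path_base_path[OF assms(1)] by (metis list.discI)
  have "last (x # r) = a"
    using tree_path_base_path[OF assms(1)] assms(2) by simp
  then have "geo G ?m a = ?m # x # r"
    using geo_eqI[OF tp] by simp
  moreover have "a \<in> set (x # r)"
    using \<open>last (x # r) = a\<close> by (metis last_in_set list.discI)
  then have "?m \<noteq> a"
    using tp by (auto simp: tree_path_def)
  ultimately show ?thesis
    using tp by (simp add: gdir_def tree_path_def)
qed

lemma lab_tedge_neq:
  assumes mx: "(m, x) \<in> tadj" and my: "(m, y) \<in> tadj" and "x \<noteq> y"
  shows "lab G m (tedge G m x) \<noteq> lab G m (tedge G m y)"
proof -
  have ex: "tedge G m x \<in> Tr G" "ends G (tedge G m x) = {m, x}"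
    and ey: "tedge G m y \<in> Tr G" "ends G (tedge G m y) = {m, y}"
    using tedge_tadj mx my by blast+
  have "tedge G m x \<noteq> tedge G m y"
  proof
    assume "tedge G m x = tedge G m y"
    then have "{m, x} = {m, y}"
      using ex ey by simp
    then show False
      using \<open>x \<noteq> y\<close> tadj_irrefl mx by (auto simp: doubleton_eq_iff)
  qed
  then show ?thesis
    using inj_onD[OF lab_inj_on] tadj_Vs mx ex ey by blast
qed

lemma vle_iff_dir_labels:
  assumes a: "a \<in> Vs G" and b: "b \<in> Vs G"
  shows "vle G a b \<longleftrightarrow> dir_labels G (base_path a) \<le> dir_labels G (base_path b)"
proof (cases rule: prefix_cases[of "base_path a" "base_path b"])
  case 1
  have "meet G a b = a"
    using meet_prefix[OF a 1] .
  moreover have "dir_labels G (base_path a) \<le> dir_labels G (base_path b)"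
    using dir_labels_prefix_le[OF 1] tree_path_base_path[OF a] by (simp add: tree_path_def)
  ultimately show ?thesis
    by (simp add: vle_def)
next
  case 2
  then obtain x r where r: "base_path a = base_path b @ x # r"
    by (auto simp: strict_prefix_def prefix_def neq_Nil_conv)
  then have "meet G a b = b"
    using meet_prefix[OF b] meet_sym[of G a b] by (metis prefixI)
  moreover have "b \<noteq> a"
    using r by auto
  ultimately have "\<not> vle G a b"
    by (simp add: vle_def gdir_def)
  moreover have "\<not> dir_labels G (base_path a) \<le> dir_labels G (base_path b)"
    using r tree_path_base_path[OF b] by (simp add: dir_labels_append not_append_Cons_le tree_path_def)
  ultimately show ?thesis
    by blast
next
  case 3
  then obtain L x ra y rb where xy: "x \<noteq> y" "base_path a = L @ x # ra" "base_path b = L @ y # rb"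
    using parallel_decomp by blast
  then have L: "L \<noteq> []" and m: "meet G a b = last L"
    using meet_parallel a b by blast+
  note ga = gdir_base_path_branch[OF a xy(2) L] and gb = gdir_base_path_branch[OF b xy(3) L]
  then have "lab G (last L) (tedge G (last L) x) \<noteq> lab G (last L) (tedge G (last L) y)"
    using lab_tedge_neq xy(1) by blast
  then show ?thesis
    using ga gb xy L
    by (simp add: vle_def Let_def m dir_labels_append append_Cons_le_append_Cons_iff)
qed

lemma vle_refl: "a \<in> Vs G \<Longrightarrow> vle G a a"
  by (simp add: vle_iff_dir_labels)

lemma vle_linear: "a \<in> Vs G \<Longrightarrow> b \<in> Vs G \<Longrightarrow> vle G a b \<or> vle G b a"
  by (simp add: vle_iff_dir_labels linear)

lemma vle_trans:
  assumes "a \<in> Vs G" "b \<in> Vs G" "c \<in> Vs G" "vle G a b" "vle G b c"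
  shows "vle G a c"
  using assms(4,5) unfolding vle_iff_dir_labels[OF assms(1,2)] vle_iff_dir_labels[OF assms(2,3)]
    vle_iff_dir_labels[OF assms(1,3)]
  by (rule order_trans)

lemma vle_antisym:
  assumes "vle G a b" "vle G b a"
  shows "a = b"
proof (rule ccontr)
  assume "a \<noteq> b"
  let ?m = "meet G a b"
  have "?m = a \<or> gdir G ?m a < gdir G ?m b" "?m = b \<or> gdir G ?m b < gdir G ?m a"
    using assms meet_sym[of G b a] unfolding vle_def Let_def by auto
  with \<open>a \<noteq> b\<close> show False
    by (auto simp: gdir_def)
qed

lemma exists_vle_least:
  assumes "finite X" "X \<noteq> {}" "X \<subseteq> Vs G"
  shows "\<exists>x\<in>X. \<forall>y\<in>X. vle G x y"
proof -
  obtain x where "is_arg_min (\<lambda>v. dir_labels G (base_path v)) (\<lambda>v. v \<in> X) x"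
    using ex_is_arg_min_if_finite[OF assms(1,2)] by blast
  then have x: "x \<in> X" "\<And>y. y \<in> X \<Longrightarrow> dir_labels G (base_path x) \<le> dir_labels G (base_path y)"
    unfolding is_arg_min_def by (auto intro: leI)
  have "vle G x y" if "y \<in> X" for y
  proof -
    have "x \<in> Vs G" "y \<in> Vs G"
      using assms(3) x(1) that by auto
    then show ?thesis
      using x(2)[OF that] by (simp add: vle_iff_dir_labels)
  qed
  then show ?thesis
    using x(1) by blast
qed

lemma parent_vlt:
  assumes "v \<in> Vs G" "v \<noteq> base G"
  shows "vlt G (parent v) v"
proof -
  have p: "base_path v = base_path (parent v) @ [v]" "parent v \<in> Vs G" "parent v \<noteq> v"
    using base_path_parent[OF assms] tadj_irrefl by auto
  moreover have "base_path (parent v) \<noteq> []"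
    using tree_path_base_path[OF p(2)] by (simp add: tree_path_def)
  ultimately have "dir_labels G (base_path (parent v)) \<le> dir_labels G (base_path v)"
    using dir_labels_prefix_le prefixI by metis
  then show ?thesis
    using vle_iff_dir_labels[OF p(2) assms(1)] p(3) by (simp add: vlt_def)
qed

end

section \<open>Principal reductions and their inverses\<close>

definition least_unblocked :: "('v,'e) gsetup \<Rightarrow> ('v + 'e) set \<Rightarrow> 'v \<Rightarrow> bool" where
  "least_unblocked G c u \<longleftrightarrow> unblocked G c u \<and> (\<forall>w. unblocked G c w \<longrightarrow> vle G u w)"

definition collapsible_shape :: "('v,'e) gsetup \<Rightarrow> ('v + 'e) set \<Rightarrow> bool" where
  "collapsible_shape G c \<longleftrightarrow> (\<exists>e. order_resp G c e) \<and>
     (\<forall>v. Inl v \<in> c \<and> vlt G v (iota G (min_order_resp G c)) \<longrightarrow> blocked G c v)"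

definition expansion :: "('v,'e) gsetup \<Rightarrow> ('v + 'e) set \<Rightarrow> 'e \<Rightarrow> ('v + 'e) set" where
  "expansion G c e = insert (Inl (iota G e)) (c - {Inr e})"

lemma mem_clo: "x \<in> clo G x"
  by (cases x) auto

lemma finite_cell_edges: "finite c \<Longrightarrow> finite {e. Inr e \<in> c}"
  using finite_vimageI[of c Inr] by (simp add: vimage_def)

lemma cdim_insert_Inr_Diff_Inl:
  assumes "finite c" "Inr e \<notin> c"
  shows "cdim (insert (Inr e) (c - {Inl v})) = Suc (cdim c)"
proof -
  have "{x. Inr x \<in> insert (Inr e) (c - {Inl v})} = insert e {x. Inr x \<in> c}"
    by auto
  moreover have "finite {x. Inr x \<in> c}" "e \<notin> {x. Inr x \<in> c}"
    using assms finite_cell_edges by auto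
  ultimately show ?thesis
    unfolding cdim_def by simp
qed

lemma cdim_insert_Inl_Diff_Inr:
  assumes "finite c" "Inr e \<in> c"
  shows "Suc (cdim (insert (Inl v) (c - {Inr e}))) = cdim c"
proof -
  have "{x. Inr x \<in> insert (Inl v) (c - {Inr e})} = {x. Inr x \<in> c} - {e}"
    by auto
  moreover have "e \<in> {x. Inr x \<in> c}" "finite {x. Inr x \<in> c}"
    using assms finite_cell_edges by auto
  moreover have "card {x. Inr x \<in> c} > 0"
    using calculation(2,3) card_gt_0_iff by blast
  ultimately show ?thesis
    unfolding cdim_def by (simp add: card_Diff_singleton)
qed

lemma is_cell_replace:
  assumes c: "is_cell G n c" and x: "x \<in> c" and y: "y \<in> Inl ` Vs G \<union> Inr ` Es G"
    and disj: "\<forall>z\<in>c - {x}. clo G y \<inter> clo G z = {}"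
  shows "is_cell G n (insert y (c - {x}))"
  unfolding is_cell_def
proof (intro conjI ballI impI)
  have "y \<notin> c - {x}"
    using disj mem_clo by blast
  moreover have "finite c" "card c = n"
    using c unfolding is_cell_def by auto
  moreover have "card c > 0"
    using calculation(2) x card_gt_0_iff by blast
  ultimately show "card (insert y (c - {x})) = n"
    using x by (simp add: card_Diff_singleton)
  show "finite (insert y (c - {x}))" "insert y (c - {x}) \<subseteq> Inl ` Vs G \<union> Inr ` Es G"
    using c y unfolding is_cell_def by auto
  fix a b assume ab: "a \<in> insert y (c - {x})" "b \<in> insert y (c - {x})" "a \<noteq> b"
  consider "a = y" | "b = y" | "a \<in> c" "b \<in> c"
    using ab by blast
  then show "clo G a \<inter> clo G b = {}"
  proof cases
    case 1
    then show ?thesis using ab disj by blast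
  next
    case 2
    then show ?thesis using ab disj by blast
  next
    case 3
    then show ?thesis using ab(3) c unfolding is_cell_def by blast
  qed
qed

lemma cell_Vs: "is_cell G n c \<Longrightarrow> Inl v \<in> c \<Longrightarrow> v \<in> Vs G"
  unfolding is_cell_def by auto

lemma cell_disjoint:
  "is_cell G n c \<Longrightarrow> x \<in> c \<Longrightarrow> y \<in> c \<Longrightarrow> x \<noteq> y \<Longrightarrow> clo G x \<inter> clo G y = {}"
  unfolding is_cell_def by auto

lemma cell_endpoint_notin: "is_cell G n c \<Longrightarrow> Inr e \<in> c \<Longrightarrow> v \<in> ends G e \<Longrightarrow> Inl v \<notin> c"
  using cell_disjoint[of G n c "Inr e" "Inl v"] by auto

lemma unblocked_vertex:
  assumes "is_cell G n d" "unblocked G d u"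
  shows "Inl u \<in> d \<and> u \<in> Vs G \<and> u \<noteq> base G"
  using assms(2) cell_Vs[OF assms(1)] unfolding unblocked_def by blast

context UD_graph
begin

lemma iota_tau_eT:
  assumes "v \<in> Vs G" "v \<noteq> base G"
  shows "iota G (eT G v) = v \<and> tau G (eT G v) = parent v"
proof -
  have e: "ends G (eT G v) = {v, parent v}"
    using eT_parent[OF assms] by blast
  have lt: "vlt G (parent v) v" and p: "parent v \<in> Vs G"
    using parent_vlt[OF assms] base_path_parent[OF assms] by auto
  then have ne: "\<not> vle G v (parent v)"
    using vle_antisym unfolding vlt_def by blast
  have "iota G (eT G v) = v"
    unfolding iota_def e by (rule the_equality) (use lt vle_refl assms ne in \<open>auto simp: vlt_def\<close>)
  moreover have "tau G (eT G v) = parent v"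
    unfolding tau_def e by (rule the_equality) (use lt vle_refl p ne in \<open>auto simp: vlt_def\<close>)
  ultimately show ?thesis
    by blast
qed

lemma tree_edge_iota:
  assumes "e \<in> Tr G"
  shows "iota G e \<in> Vs G \<and> iota G e \<noteq> base G \<and> eT G (iota G e) = e \<and>
    tau G e = parent (iota G e) \<and> ends G e = {iota G e, tau G e}"
proof -
  obtain v where v: "v \<in> Vs G" "v \<noteq> base G" "eT G v = e"
    using tree_edge_eT[OF assms] by blast
  then show ?thesis
    using iota_tau_eT[OF v(1,2)] eT_parent[OF v(1,2)] by auto
qed

lemma eT_clo:
  assumes "v \<in> Vs G" "v \<noteq> base G"
  shows "clo G (Inr (eT G v)) = {Inr (eT G v), Inl v, Inl (parent v)}"
  using eT_parent[OF assms] by simp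

lemma blocker_contains_parent:
  assumes c: "is_cell G n c" and v: "Inl v \<in> c" "v \<noteq> base G"
    and x: "x \<in> c" "x \<noteq> Inl v" "clo G (Inr (eT G v)) \<inter> clo G x \<noteq> {}"
  shows "Inl (parent v) \<in> clo G x"
proof -
  have vV: "v \<in> Vs G"
    using cell_Vs[OF c v(1)] .
  have dis: "Inl v \<notin> clo G x"
    using cell_disjoint[OF c x(1) v(1) x(2)] by auto
  then have "x \<noteq> Inr (eT G v)"
    using eT_clo[OF vV v(2)] by auto
  then have "Inr (eT G v) \<notin> clo G x"
    by (cases x) auto
  then show ?thesis
    using x(3) dis eT_clo[OF vV v(2)] by auto
qed

lemma order_resp_in_tree: "order_resp G c e \<Longrightarrow> Inr e \<in> c \<and> e \<in> Tr G"
  unfolding order_resp_def by blast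

lemma tree_edge_iota_inj:
  assumes "e1 \<in> Tr G" "e2 \<in> Tr G" "iota G e1 = iota G e2"
  shows "e1 = e2"
proof -
  have "eT G (iota G e1) = e1" "eT G (iota G e2) = e2"
    using tree_edge_iota assms(1,2) by blast+
  then show ?thesis
    using assms(3) by metis
qed

lemma exists_least_order_resp:
  assumes c: "is_cell G n c" and ex: "\<exists>e. order_resp G c e"
  shows "\<exists>e0. order_resp G c e0 \<and> (\<forall>e'. order_resp G c e' \<longrightarrow> vle G (iota G e0) (iota G e'))"
proof -
  let ?X = "{e. order_resp G c e}"
  have "?X \<subseteq> {e. Inr e \<in> c}"
    using order_resp_in_tree by blast
  moreover have "finite {e. Inr e \<in> c}"
    using finite_cell_edges c unfolding is_cell_def by blast
  ultimately have "finite (iota G ` ?X)"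
    using finite_subset by (metis finite_imageI)
  moreover have "iota G e \<in> Vs G" if "order_resp G c e" for e
    using tree_edge_iota order_resp_in_tree[OF that] by blast
  then have "iota G ` ?X \<subseteq> Vs G"
    by blast
  moreover have "iota G ` ?X \<noteq> {}"
    using ex by blast
  ultimately obtain m where "m \<in> iota G ` ?X" "\<forall>y\<in>iota G ` ?X. vle G m y"
    using exists_vle_least by meson
  then show ?thesis
    by blast
qed

lemma min_order_resp:
  assumes c: "is_cell G n c" and ex: "\<exists>e. order_resp G c e"
  shows "order_resp G c (min_order_resp G c) \<and>
    (\<forall>e'. order_resp G c e' \<longrightarrow> vle G (iota G (min_order_resp G c)) (iota G e'))"
proof -
  obtain e0 where e0: "order_resp G c e0" "\<forall>e'. order_resp G c e' \<longrightarrow> vle G (iota G e0) (iota G e')"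
    using exists_least_order_resp[OF c ex] by blast
  have "min_order_resp G c = e0"
    unfolding min_order_resp_def
  proof (rule the_equality)
    show "order_resp G c e0 \<and> (\<forall>e'. order_resp G c e' \<longrightarrow> vle G (iota G e0) (iota G e'))"
      using e0 by blast
  next
    fix e1 assume e1: "order_resp G c e1 \<and> (\<forall>e'. order_resp G c e' \<longrightarrow> vle G (iota G e1) (iota G e'))"
    then have "iota G e1 = iota G e0"
      using e0 vle_antisym by blast
    then show "e1 = e0"
      using tree_edge_iota_inj order_resp_in_tree e1 e0(1) by blast
  qed
  then show ?thesis
    using e0 by blast
qed

lemma exists_least_unblocked:
  assumes c: "is_cell G n c" and ex: "\<exists>v. unblocked G c v"
  shows "\<exists>u. least_unblocked G c u"
proof -
  let ?X = "{v. unblocked G c v}"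
  have "?X \<subseteq> Inl -` c"
    unfolding unblocked_def by blast
  moreover have "finite (Inl -` c)"
    using finite_vimageI[OF _ inj_Inl] c unfolding is_cell_def by blast
  ultimately have "finite ?X"
    by (rule finite_subset)
  moreover have "?X \<subseteq> Vs G"
    using cell_Vs[OF c] unfolding unblocked_def by blast
  ultimately show ?thesis
    using exists_vle_least[of ?X] ex unfolding least_unblocked_def by blast
qed

lemma principal_eq_elred:
  assumes u: "least_unblocked G c u"
  shows "principal G c = Some (elred G c u)"
proof -
  have "(THE v. unblocked G c v \<and> (\<forall>w. unblocked G c w \<longrightarrow> vle G v w)) = u"
    using u vle_antisym unfolding least_unblocked_def by (intro the_equality) blast+
  then show ?thesis
    using u unfolding principal_def least_unblocked_def by auto
qed

lemma is_cell_elred: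
  assumes d: "is_cell G n d" and u: "unblocked G d u"
  shows "is_cell G n (elred G d u)"
proof -
  have uV: "Inl u \<in> d" "u \<in> Vs G" "u \<noteq> base G"
    using unblocked_vertex[OF d u] by blast+
  have "Inr (eT G u) \<in> Inl ` Vs G \<union> Inr ` Es G"
    using eT_parent[OF uV(2,3)] Tr_subset_Es by blast
  moreover have "\<forall>z\<in>d - {Inl u}. clo G (Inr (eT G u)) \<inter> clo G z = {}"
    using u unfolding unblocked_def by blast
  ultimately show ?thesis
    unfolding elred_def by (rule is_cell_replace[OF d uV(1)])
qed

lemma cdim_elred:
  assumes d: "is_cell G n d" and u: "unblocked G d u"
  shows "cdim (elred G d u) = Suc (cdim d)"
proof -
  have "Inr (eT G u) \<notin> d"
  proof
    assume "Inr (eT G u) \<in> d"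
    moreover have "Inr (eT G u) \<in> clo G (Inr (eT G u))"
      by simp
    ultimately show False
      using u unfolding unblocked_def by blast
  qed
  moreover have "finite d"
    using d unfolding is_cell_def by blast
  ultimately show ?thesis
    unfolding elred_def by (rule cdim_insert_Inr_Diff_Inl[rotated])
qed

lemma unblocked_parent_notin:
  assumes d: "is_cell G n d" and u: "unblocked G d u"
  shows "Inl (parent u) \<notin> d"
proof
  assume pd: "Inl (parent u) \<in> d"
  have uV: "u \<in> Vs G" "u \<noteq> base G"
    using unblocked_vertex[OF d u] by blast+
  then have "parent u \<noteq> u"
    using parent_vlt unfolding vlt_def by blast
  moreover have "Inl (parent u) \<in> clo G (Inr (eT G u))"
    using eT_clo[OF uV] by simp
  ultimately show False
    using u pd unfolding unblocked_def by fastforce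
qed

text \<open>Any blocker of v contains parent v = parent u, so it meets e(u) and would block u as well.\<close>

lemma sibling_of_least_unblocked:
  assumes d: "is_cell G n d" and u: "least_unblocked G d u"
    and v: "Inl v \<in> d" "v \<noteq> u" "v \<noteq> base G" "parent v = parent u"
  shows "vlt G u v"
proof (rule ccontr)
  assume "\<not> vlt G u v"
  then have "\<not> unblocked G d v"
    using u v(2) unfolding least_unblocked_def vlt_def by blast
  then obtain x where x: "x \<in> d" "x \<noteq> Inl v" "clo G (Inr (eT G v)) \<inter> clo G x \<noteq> {}"
    using v unfolding unblocked_def by blast
  then have "Inl (parent u) \<in> clo G x"
    using blocker_contains_parent[OF d v(1,3) x] v(4) by simp
  moreover have uV: "u \<in> Vs G" "u \<noteq> base G"
    using u unblocked_vertex[OF d] unfolding least_unblocked_def by blast+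
  then have "Inl (parent u) \<in> clo G (Inr (eT G u))"
    using eT_clo by simp
  moreover have "x \<noteq> Inl u"
    using calculation(1) parent_vlt[OF uV] unfolding vlt_def by auto
  ultimately show False
    using u x(1) unfolding least_unblocked_def unblocked_def by blast
qed

lemma order_resp_elred:
  assumes d: "is_cell G n d" and u: "least_unblocked G d u"
  shows "order_resp G (elred G d u) (eT G u)"
  unfolding order_resp_def
proof (intro conjI allI impI)
  have ub: "unblocked G d u"
    using u unfolding least_unblocked_def by blast
  have uV: "u \<in> Vs G" "u \<noteq> base G"
    using unblocked_vertex[OF d ub] by blast+
  have io: "iota G (eT G u) = u" "tau G (eT G u) = parent u"
    using iota_tau_eT[OF uV] by blast+
  show "Inr (eT G u) \<in> elred G d u"
    by (simp add: elred_def)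
  show "eT G u \<in> Tr G"
    using eT_parent[OF uV] by blast
  fix v assume v: "Inl v \<in> elred G d u \<and> v \<noteq> base G \<and>
    clo G (Inr (eT G v)) \<inter> clo G (Inr (eT G u)) = {Inl (tau G (eT G u))}"
  then have vd: "Inl v \<in> d" "v \<noteq> u" "v \<noteq> base G"
    by (auto simp: elred_def)
  have "Inl (tau G (eT G u)) \<in> clo G (Inr (eT G v))"
    using v by (metis IntD1 singletonI)
  then have "parent u = v \<or> parent u = parent v"
    by (simp add: io(2) eT_parent[OF cell_Vs[OF d vd(1)] vd(3)])
  moreover have "parent u \<noteq> v"
    using unblocked_parent_notin[OF d ub] vd(1) by blast
  ultimately show "vlt G (iota G (eT G u)) v"
    using sibling_of_least_unblocked[OF d u vd] io(1) by simp
qed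

lemma blocked_elred_below:
  assumes d: "is_cell G n d" and u: "least_unblocked G d u" and v: "Inl v \<in> d" "vlt G v u"
  shows "blocked G (elred G d u) v"
proof (cases "v = base G")
  case True
  then show ?thesis
    using v(1,2) unfolding blocked_def unblocked_def elred_def vlt_def by auto
next
  case False
  have vV: "v \<in> Vs G"
    using cell_Vs[OF d v(1)] .
  have "\<not> unblocked G d v"
    using u v(2) vle_antisym unfolding least_unblocked_def vlt_def by blast
  then obtain x where x: "x \<in> d" "x \<noteq> Inl v" "clo G (Inr (eT G v)) \<inter> clo G x \<noteq> {}"
    using v(1) False unfolding unblocked_def by blast
  have "x \<noteq> Inl u"
  proof
    assume "x = Inl u"
    then have "parent v = u"
      using blocker_contains_parent[OF d v(1) False x] by simp
    then show False
      using parent_vlt[OF vV False] v(2) vle_antisym unfolding vlt_def by blast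
  qed
  then have "x \<in> elred G d u"
    using x(1) by (simp add: elred_def)
  moreover have "Inl v \<in> elred G d u"
    using v unfolding elred_def vlt_def by auto
  ultimately show ?thesis
    using x(2,3) unfolding blocked_def unblocked_def by blast
qed

lemma collapsible_shape_elred:
  assumes d: "is_cell G n d" and u: "least_unblocked G d u"
  shows "collapsible_shape G (elred G d u)"
  unfolding collapsible_shape_def
proof (intro conjI allI impI)
  let ?c = "elred G d u"
  have ub: "unblocked G d u"
    using u unfolding least_unblocked_def by blast
  have uV: "u \<in> Vs G" "u \<noteq> base G"
    using unblocked_vertex[OF d ub] by blast+
  have OR: "order_resp G ?c (eT G u)"
    using order_resp_elred[OF d u] .
  then show "\<exists>e. order_resp G ?c e"
    by blast
  let ?m = "min_order_resp G ?c"
  have "order_resp G ?c ?m" "vle G (iota G ?m) (iota G (eT G u))"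
    using min_order_resp[OF is_cell_elred[OF d ub]] OR by blast+
  then have mu: "vle G (iota G ?m) u" and mV: "iota G ?m \<in> Vs G"
    using iota_tau_eT[OF uV] tree_edge_iota order_resp_in_tree by auto
  fix v assume v: "Inl v \<in> ?c \<and> vlt G v (iota G ?m)"
  then have vd: "Inl v \<in> d" "v \<noteq> u"
    by (auto simp: elred_def)
  have "vle G v u"
    using vle_trans[OF cell_Vs[OF d vd(1)] mV uV(1)] v mu unfolding vlt_def by blast
  then show "blocked G ?c v"
    using blocked_elred_below[OF d u vd(1)] vd(2) unfolding vlt_def by blast
qed

lemma is_cell_expansion:
  assumes c: "is_cell G n c" and e: "Inr e \<in> c" "e \<in> Tr G"
  shows "is_cell G n (expansion G c e)"
proof -
  have iV: "iota G e \<in> Vs G" and "ends G e = {iota G e, tau G e}"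
    using tree_edge_iota[OF e(2)] by blast+
  then have ie: "Inl (iota G e) \<in> clo G (Inr e)"
    by simp
  have "clo G (Inl (iota G e)) \<inter> clo G z = {}" if "z \<in> c - {Inr e}" for z
  proof -
    have "clo G (Inr e) \<inter> clo G z = {}"
      using cell_disjoint[OF c e(1)] that by blast
    then show ?thesis
      using ie by auto
  qed
  moreover have "Inl (iota G e) \<in> Inl ` Vs G \<union> Inr ` Es G"
    using iV by blast
  ultimately show ?thesis
    unfolding expansion_def using is_cell_replace[OF c e(1)] by blast
qed

lemma cdim_expansion:
  assumes "is_cell G n c" "Inr e \<in> c"
  shows "Suc (cdim (expansion G c e)) = cdim c"
proof -
  have "finite c"
    using assms(1) unfolding is_cell_def by blast
  then show ?thesis
    unfolding expansion_def using assms(2) by (rule cdim_insert_Inl_Diff_Inr)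
qed

lemma unblocked_expansion:
  assumes c: "is_cell G n c" and e: "Inr e \<in> c" "e \<in> Tr G"
  shows "unblocked G (expansion G c e) (iota G e)"
  unfolding unblocked_def
proof (intro conjI ballI impI)
  show "Inl (iota G e) \<in> expansion G c e"
    by (simp add: expansion_def)
  show "iota G e \<noteq> base G"
    using tree_edge_iota[OF e(2)] by blast
  fix x assume "x \<in> expansion G c e" "x \<noteq> Inl (iota G e)"
  then have "x \<in> c" "x \<noteq> Inr e"
    by (auto simp: expansion_def)
  then show "clo G (Inr (eT G (iota G e))) \<inter> clo G x = {}"
    using cell_disjoint[OF c e(1)] tree_edge_iota[OF e(2)] by auto
qed

lemma elred_expansion:
  assumes c: "is_cell G n c" and e: "Inr e \<in> c" "e \<in> Tr G"
  shows "elred G (expansion G c e) (iota G e) = c"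
proof -
  have "Inl (iota G e) \<notin> c" "eT G (iota G e) = e"
    using cell_endpoint_notin[OF c e(1)] tree_edge_iota[OF e(2)] by auto
  then show ?thesis
    using e(1) unfolding elred_def expansion_def by auto
qed

lemma order_resp_sibling:
  assumes c: "is_cell G n c" and e: "order_resp G c e"
    and w: "Inl w \<in> c" "w \<noteq> base G" "parent w = tau G e"
  shows "vlt G (iota G e) w"
proof -
  have eT: "Inr e \<in> c" "e \<in> Tr G"
    using order_resp_in_tree[OF e] by blast+
  have wV: "w \<in> Vs G"
    using cell_Vs[OF c w(1)] .
  have ef: "ends G e = {iota G e, tau G e}" "eT G (iota G e) = e"
    using tree_edge_iota[OF eT(2)] by blast+
  have "w \<notin> ends G e"
    using cell_endpoint_notin[OF c eT(1)] w(1) by blast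
  then have "eT G w \<noteq> e" "w \<noteq> iota G e" "w \<noteq> tau G e"
    using eT_parent[OF wV w(2)] ef(1) by auto
  then have "clo G (Inr (eT G w)) \<inter> clo G (Inr e) = {Inl (tau G e)}"
    using eT_clo[OF wV w(2)] ef(1) w(3) by auto
  then show ?thesis
    using e w(1,2) unfolding order_resp_def by blast
qed

text \<open>A vertex w < iota(e) is blocked in c, and if it is unblocked after the expansion then e
  was its only blocker; then parent w is an endpoint of e, and either endpoint puts w above
  iota(e).\<close>

lemma least_unblocked_expansion:
  assumes c: "is_cell G n c" and C: "collapsible_shape G c"
  shows "least_unblocked G (expansion G c (min_order_resp G c)) (iota G (min_order_resp G c))"
proof -
  define e where "e = min_order_resp G c"
  let ?d = "expansion G c e" and ?i = "iota G e"
  have ORe: "order_resp G c e"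
    using min_order_resp[OF c] C unfolding collapsible_shape_def e_def by blast
  have eT: "Inr e \<in> c" "e \<in> Tr G"
    using order_resp_in_tree[OF ORe] by blast+
  have iV: "?i \<in> Vs G" and tp: "tau G e = parent ?i" and ee: "ends G e = {?i, tau G e}"
    using tree_edge_iota[OF eT(2)] by blast+
  have blk: "\<And>v. Inl v \<in> c \<Longrightarrow> vlt G v ?i \<Longrightarrow> blocked G c v"
    using C unfolding collapsible_shape_def e_def by blast
  have "vle G ?i w" if w: "unblocked G ?d w" for w
  proof (rule ccontr)
    assume nle: "\<not> vle G ?i w"
    have wd: "Inl w \<in> ?d" "w \<noteq> base G" "w \<in> Vs G"
      using unblocked_vertex[OF is_cell_expansion[OF c eT] w] by blast+
    have wi: "vlt G w ?i"
      using vle_linear[OF wd(3) iV] nle vle_refl[OF iV] unfolding vlt_def by blast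
    then have wc: "Inl w \<in> c"
      using wd(1) unfolding expansion_def vlt_def by auto
    obtain x where x: "x \<in> c" "x \<noteq> Inl w" "clo G (Inr (eT G w)) \<inter> clo G x \<noteq> {}"
      using blk[OF wc wi] wd(2) unfolding blocked_def unblocked_def by blast
    have "x = Inr e"
      using w x wc unfolding unblocked_def expansion_def by auto
    then have "Inl (parent w) \<in> clo G (Inr e)"
      using blocker_contains_parent[OF c wc wd(2) x] by simp
    then have "parent w = ?i \<or> parent w = tau G e"
      using ee by auto
    then have "vlt G ?i w"
      using parent_vlt[OF wd(3,2)] order_resp_sibling[OF c ORe wc wd(2)] by auto
    then show False
      using wi vle_antisym unfolding vlt_def by blast
  qed
  then show ?thesis
    using unblocked_expansion[OF c eT] unfolding least_unblocked_def e_def by blast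
qed

lemma not_collapsible_shape_expansion:
  assumes c: "is_cell G n c" and C: "collapsible_shape G c"
  shows "\<not> collapsible_shape G (expansion G c (min_order_resp G c))"
proof
  define e where "e = min_order_resp G c"
  let ?d = "expansion G c e" and ?i = "iota G e"
  assume Cd: "collapsible_shape G ?d"
  have M: "order_resp G c e" "\<And>e'. order_resp G c e' \<Longrightarrow> vle G ?i (iota G e')"
    using min_order_resp[OF c] C unfolding collapsible_shape_def e_def by blast+
  have eT: "Inr e \<in> c" "e \<in> Tr G"
    using order_resp_in_tree[OF M(1)] by blast+
  have d: "is_cell G n ?d"
    using is_cell_expansion[OF c eT] .
  define e2 where "e2 = min_order_resp G ?d"
  have OR2: "order_resp G ?d e2"
    using min_order_resp[OF d] Cd unfolding collapsible_shape_def e2_def by blast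
  have e2T: "e2 \<in> Tr G" "Inr e2 \<in> ?d"
    using order_resp_in_tree[OF OR2] by blast+
  have "order_resp G c e2"
    using OR2 unfolding order_resp_def expansion_def by auto
  then have "vle G ?i (iota G e2)"
    using M(2) by blast
  moreover have "e2 \<noteq> e"
    using e2T(2) unfolding expansion_def by auto
  then have "iota G e2 \<noteq> ?i"
    using tree_edge_iota_inj[OF e2T(1) eT(2)] by blast
  ultimately have "vlt G ?i (iota G e2)"
    unfolding vlt_def by simp
  then have "blocked G ?d ?i"
    using Cd unfolding collapsible_shape_def e2_def expansion_def by auto
  then show False
    using unblocked_expansion[OF c eT] unfolding blocked_def by blast
qed

lemma principal_expansion:
  assumes c: "is_cell G n c" and C: "collapsible_shape G c"
  shows "principal G (expansion G c (min_order_resp G c)) = Some c"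
proof -
  have "Inr (min_order_resp G c) \<in> c" "min_order_resp G c \<in> Tr G"
    using min_order_resp[OF c] C order_resp_in_tree unfolding collapsible_shape_def by blast+
  then show ?thesis
    using principal_eq_elred[OF least_unblocked_expansion[OF c C]] elred_expansion[OF c] by simp
qed

lemma principal_eq_None_iff: "principal G c = None \<longleftrightarrow> (\<forall>v. \<not> unblocked G c v)"
  unfolding principal_def by simp

lemma collapsible_shape_cdim_pos:
  assumes c: "is_cell G n c" and C: "collapsible_shape G c"
  shows "0 < cdim c"
proof -
  obtain e where "Inr e \<in> c"
    using C order_resp_in_tree unfolding collapsible_shape_def by blast
  moreover have "finite {e. Inr e \<in> c}"
    using c finite_cell_edges unfolding is_cell_def by blast
  ultimately show ?thesis
    unfolding cdim_def by (metis card_gt_0_iff empty_iff mem_Collect_eq)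
qed

lemma principal_image_Wdom_iff:
  assumes W: "\<And>d. d \<in> Wdom G n i \<longleftrightarrow>
      is_cell G n d \<and> cdim d = i \<and> (\<exists>v. unblocked G d v) \<and> \<not> collapsible_shape G d"
    and c: "is_cell G n c"
  shows "c \<in> (\<lambda>d. the (principal G d)) ` Wdom G n i \<longleftrightarrow> cdim c = Suc i \<and> collapsible_shape G c"
proof
  assume "c \<in> (\<lambda>d. the (principal G d)) ` Wdom G n i"
  then obtain d where d: "d \<in> Wdom G n i" "c = the (principal G d)"
    by blast
  have dc: "is_cell G n d" "cdim d = i" "\<exists>v. unblocked G d v"
    using W d(1) by blast+
  obtain u where u: "least_unblocked G d u"
    using exists_least_unblocked[OF dc(1,3)] by blast
  then have "c = elred G d u"
    using principal_eq_elred d(2) by simp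
  moreover have "unblocked G d u"
    using u unfolding least_unblocked_def by blast
  ultimately show "cdim c = Suc i \<and> collapsible_shape G c"
    using cdim_elred collapsible_shape_elred dc u by blast
next
  assume h: "cdim c = Suc i \<and> collapsible_shape G c"
  let ?e = "min_order_resp G c"
  let ?d = "expansion G c ?e"
  have e: "Inr ?e \<in> c" "?e \<in> Tr G"
    using min_order_resp[OF c] h order_resp_in_tree unfolding collapsible_shape_def by blast+
  have "cdim ?d = i"
    using cdim_expansion[OF c e(1)] h by simp
  then have "?d \<in> Wdom G n i"
    using W is_cell_expansion[OF c e] unblocked_expansion[OF c e]
      not_collapsible_shape_expansion[OF c] h by blast
  moreover have "c = the (principal G ?d)"
    using principal_expansion[OF c] h by simp
  ultimately show "c \<in> (\<lambda>d. the (principal G d)) ` Wdom G n i"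
    by blast
qed

lemma Wdom_iff:
  "c \<in> Wdom G n i \<longleftrightarrow>
     is_cell G n c \<and> cdim c = i \<and> (\<exists>v. unblocked G c v) \<and> \<not> collapsible_shape G c"
proof (induction i arbitrary: c)
  case 0
  have "\<not> collapsible_shape G c" if "is_cell G n c" "cdim c = 0"
    using collapsible_shape_cdim_pos that by fastforce
  then show ?case
    using principal_eq_None_iff by auto
next
  case (Suc i)
  have "c \<in> (\<lambda>d. the (principal G d)) ` Wdom G n i \<longleftrightarrow> collapsible_shape G c"
    if "is_cell G n c" "cdim c = Suc i"
    using principal_image_Wdom_iff[OF Suc.IH that(1)] that(2) by blast
  then show ?case
    using principal_eq_None_iff by auto
qed

lemma redundant_iff:
  "is_cell G n c \<Longrightarrow> redundant G n c \<longleftrightarrow> (\<exists>v. unblocked G c v) \<and> \<not> collapsible_shape G c"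
  unfolding redundant_def using Wdom_iff by blast

lemma collapsible_iff:
  assumes c: "is_cell G n c"
  shows "collapsible G n c \<longleftrightarrow> collapsible_shape G c"
proof
  assume "collapsible G n c"
  then show "collapsible_shape G c"
    unfolding collapsible_def using principal_image_Wdom_iff[OF Wdom_iff c] by blast
next
  assume C: "collapsible_shape G c"
  then obtain i where "cdim c = Suc i"
    using collapsible_shape_cdim_pos[OF c] gr0_implies_Suc by blast
  then show "collapsible G n c"
    unfolding collapsible_def using principal_image_Wdom_iff[OF Wdom_iff c] C by blast
qed

end

theorem mainTheorem7:
  fixes G :: "('v,'e) gsetup" and n :: nat and c :: "('v + 'e) set"
  assumes "UD_setup G" and "n \<ge> 1" and "is_cell G n c"
  shows "(critical G n c \<longleftrightarrow>
            (\<not> (\<exists>e. order_resp G c e)) \<and> (\<forall>v. Inl v \<in> c \<longrightarrow> blocked G c v))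
       \<and> (redundant G n c \<longleftrightarrow>
            ((\<not> (\<exists>e. order_resp G c e)) \<and> (\<exists>v. unblocked G c v))
            \<or> ((\<exists>e. order_resp G c e) \<and>
               (\<exists>v. unblocked G c v \<and> vlt G v (iota G (min_order_resp G c)))))
       \<and> (collapsible G n c \<longleftrightarrow>
            (\<exists>e. order_resp G c e) \<and>
            (\<forall>v. Inl v \<in> c \<and> vlt G v (iota G (min_order_resp G c)) \<longrightarrow> blocked G c v))"
proof -
  interpret UD_graph G
    using assms(1) by unfold_locales
  have "redundant G n c \<longleftrightarrow> (\<exists>v. unblocked G c v) \<and> \<not> collapsible_shape G c"
    using redundant_iff[OF assms(3)] .
  moreover have "collapsible G n c \<longleftrightarrow> collapsible_shape G c"
    using collapsible_iff[OF assms(3)] .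
  moreover have "\<And>v. unblocked G c v \<Longrightarrow> Inl v \<in> c"
    unfolding unblocked_def by blast
  ultimately show ?thesis
    unfolding critical_def collapsible_shape_def blocked_def using assms(3) by blast
qed

end
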